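(* An interval order is better-quasi-ordered if and only if it is well-quasi-ordered.
   Context: A poset $P$ is an interval order if it is isomorphic to a set of nonempty intervals of some chain $C$, ordered by $I<J$ iff $x<y$ for every $x\in I$ and every $y\in J$. A quasi-ordered set is well-quasi-ordered (wqo) if it is well-founded and has no infinite antichain. Barriers and bqo: finite subsets of $\mathbb{N}$ are identified with their increasing enumerations. For finite $s,t\subseteq\mathbb{N}$ write $s\triangleleft t$ if there is a finite $r\subseteq\mathbb{N}$ such that $s$ is a proper initial segment of $r$ and $t$ is $r$ with its least element removed. A barrier is an infinite set $B$ of finite subsets of $\mathbb{N}$, no member of which is a proper subset of another, such that every infinite $X\subseteq\bigcup B$ has a nonempty initial segment belonging to $B$. A barrier is well-ordered by the lexicographic order; its order type is the type of this well-order. A map $f$ from a barrier $B$ into a quasi-ordered set $Q$ is good if there exist $s,t\in B$ with $s\triangleleft t$ and $f(s)\leq f(t)$, and bad otherwise. For a countable ordinal $\alpha$, $Q$ is $\alpha$-bqo if every map from a barrier of order type at most $\alpha$ into $Q$ is good; $Q$ is better-quasi-ordered (bqo) if it is $\alpha$-bqo for every countable ordinal $\alpha$. *)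

theory Defs
  imports Main "HOL-Library.Countable_Set"
begin

definition antichain_on :: "'a set \<Rightarrow> 'a rel \<Rightarrow> 'a set \<Rightarrow> bool" where
  "antichain_on A r S \<longleftrightarrow> S \<subseteq> A \<and>
     (\<forall>x\<in>S. \<forall>y\<in>S. x \<noteq> y \<longrightarrow> (x, y) \<notin> r \<and> (y, x) \<notin> r)"

definition strict_part :: "'a set \<Rightarrow> 'a rel \<Rightarrow> 'a rel" where
  "strict_part A r = {(x, y). x \<in> A \<and> y \<in> A \<and> (x, y) \<in> r \<and> (y, x) \<notin> r}"

definition wqo_on :: "'a set \<Rightarrow> 'a rel \<Rightarrow> bool" where
  "wqo_on A r \<longleftrightarrow> preorder_on A r \<and> wf (strict_part A r) \<and>
     (\<forall>S. antichain_on A r S \<longrightarrow> finite S)"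

text \<open>Finite subsets of nat are identified with their increasing enumerations.
s is an initial segment of X (X possibly infinite).\<close>
definition init_seg :: "nat set \<Rightarrow> nat set \<Rightarrow> bool" where
  "init_seg s X \<longleftrightarrow> s \<subseteq> X \<and> (\<forall>x\<in>s. \<forall>y\<in>X. y < x \<longrightarrow> y \<in> s)"

definition shift_rel :: "nat set \<Rightarrow> nat set \<Rightarrow> bool" (infix \<open>\<lhd>\<close> 50) where
  "s \<lhd> t \<longleftrightarrow> (\<exists>r. finite r \<and> init_seg s r \<and> s \<noteq> r \<and> t = r - {Min r})"

definition barrier :: "nat set set \<Rightarrow> bool" where
  "barrier B \<longleftrightarrow> infinite B \<and> (\<forall>s\<in>B. finite s) \<and>
     (\<forall>s\<in>B. \<forall>t\<in>B. \<not> s \<subset> t) \<and>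
     (\<forall>X. X \<subseteq> \<Union>B \<longrightarrow> infinite X \<longrightarrow> (\<exists>s\<in>B. s \<noteq> {} \<and> init_seg s X))"

definition lex_rel :: "nat set set \<Rightarrow> nat set rel" where
  "lex_rel B = {(s, t). s \<in> B \<and> t \<in> B \<and>
     (s = t \<or> (sorted_list_of_set s, sorted_list_of_set t) \<in> lexord {(a, b). a < b})}"

definition good :: "'a rel \<Rightarrow> nat set set \<Rightarrow> (nat set \<Rightarrow> 'a) \<Rightarrow> bool" where
  "good r B f \<longleftrightarrow> (\<exists>s\<in>B. \<exists>t\<in>B. s \<lhd> t \<and> (f s, f t) \<in> r)"

text \<open>Countable ordinals are represented by well-orders on subsets of nat.
The order type of a barrier being at most alpha is (lex_rel B, alpha) in ordLeq.\<close>
definition alpha_bqo :: "nat rel \<Rightarrow> 'a set \<Rightarrow> 'a rel \<Rightarrow> bool" where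
  "alpha_bqo \<alpha> A r \<longleftrightarrow> (\<forall>B f. barrier B \<longrightarrow> (lex_rel B, \<alpha>) \<in> ordLeq \<longrightarrow> f ` B \<subseteq> A \<longrightarrow> good r B f)"

definition bqo_on :: "'a set \<Rightarrow> 'a rel \<Rightarrow> bool" where
  "bqo_on A r \<longleftrightarrow> preorder_on A r \<and>
     (\<forall>\<alpha>::nat rel. Well_order \<alpha> \<longrightarrow> countable (Field \<alpha>) \<longrightarrow> alpha_bqo \<alpha> A r)"

definition interval_of :: "'c::linorder set \<Rightarrow> 'c set \<Rightarrow> bool" where
  "interval_of C I \<longleftrightarrow> I \<noteq> {} \<and> I \<subseteq> C \<and>
     (\<forall>x\<in>I. \<forall>z\<in>I. \<forall>y\<in>C. x \<le> y \<and> y \<le> z \<longrightarrow> y \<in> I)"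

definition interval_order_in :: "'a set \<Rightarrow> 'a rel \<Rightarrow> 'c::linorder set \<Rightarrow> bool" where
  "interval_order_in A r C \<longleftrightarrow> partial_order_on A r \<and>
     (\<exists>f. inj_on f A \<and> (\<forall>x\<in>A. interval_of C (f x)) \<and>
        (\<forall>x\<in>A. \<forall>y\<in>A. (x, y) \<in> r \<longleftrightarrow> x = y \<or> (\<forall>u\<in>f x. \<forall>v\<in>f y. u < v)))"

end

(*
  The implication bqo => wqo only needs the barrier of singletons: a bad map on it is a
  bad sequence.

  Conversely, the strict upper sets of an interval order form a chain (interval orders are
  2+2-free), and every wqo partial order with this property is bqo. Let f be a bad map on a
  barrier B. Nash-Williams' partition theorem and a fusion argument give x0 and an infinite
  set N above x0 such that, for t in B inside N, prepending x0 to t never shrinks the upper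
  set of the value of f; otherwise these upper sets would strictly increase along some
  sequence, which a wqo forbids. Hence, whenever insert x0 u is in B, f maps the proper
  extensions of u inside N into the finite antichain of elements that are not above
  f (insert x0 u) but whose upper set is contained in that of f (insert x0 u). A second
  fusion makes f constant on these extensions, for all u at once, on an infinite N' within N,
  and the constants form a bad map on the barrier of all u within N' with insert x0 u in B.
  That barrier lies in the derivative of B at x0, and descent along derivatives is well
  founded, so there is no bad map at all.
*)

theory Submission
  imports Defs "HOL-Library.Ramsey"
begin

lemma init_seg_subset: "init_seg s X \<Longrightarrow> s \<subseteq> X"
  unfolding init_seg_def by blast

lemma init_seg_trans: "init_seg s t \<Longrightarrow> init_seg t X \<Longrightarrow> init_seg s X"
  unfolding init_seg_def by blast

lemma init_seg_linear:
  assumes "init_seg s X" "init_seg t X" shows "s \<subseteq> t \<or> t \<subseteq> s"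
proof (rule disjCI)
  assume "\<not> t \<subseteq> s"
  then obtain x where x: "x \<in> t" "x \<notin> s" by blast
  show "s \<subseteq> t"
  proof
    fix y assume "y \<in> s"
    with x assms have "\<not> x < y" unfolding init_seg_def by blast
    with \<open>y \<in> s\<close> x assms show "y \<in> t"
      unfolding init_seg_def by (metis linorder_neqE_nat subsetD)
  qed
qed

lemma init_seg_of_subset: "init_seg s X \<Longrightarrow> init_seg t X \<Longrightarrow> s \<subseteq> t \<Longrightarrow> init_seg s t"
  unfolding init_seg_def by blast

lemma init_seg_insert:
  assumes "init_seg u L" "\<forall>y\<in>L. x < y"
  shows "init_seg (insert x u) (insert x L)"
  using assms unfolding init_seg_def by fastforce

lemma init_seg_insert_dest:
  assumes "init_seg s (insert x X)" "\<forall>y\<in>X. x < y" "s \<noteq> {}"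
  shows "x \<in> s" "init_seg (s - {x}) X"
proof -
  obtain z where "z \<in> s" using assms(3) by blast
  then show "x \<in> s"
    using assms(1,2) unfolding init_seg_def by (cases "z = x") auto
  then show "init_seg (s - {x}) X"
    using assms(1,2) unfolding init_seg_def by auto
qed

lemma init_seg_diff_subset:
  assumes "init_seg u t" "x \<in> u" "\<forall>z\<in>p. z < x" "t \<subseteq> insert x p \<union> M"
  shows "t - u \<subseteq> M"
proof
  fix y assume y: "y \<in> t - u"
  then have "x < y" using assms(1,2) unfolding init_seg_def by (metis DiffE linorder_neqE_nat)
  then have "y \<notin> insert x p" using assms(3) by fastforce
  then show "y \<in> M" using y assms(4) by blast
qed

lemma init_seg_Un_tail:
  assumes "finite t" shows "init_seg t (t \<union> {y\<in>N. Max t < y})"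
  using Max_ge[OF assms] unfolding init_seg_def by fastforce

lemma infinite_tail: "infinite (N :: nat set) \<Longrightarrow> infinite {y\<in>N. x < y}"
proof -
  assume "infinite N"
  then have "infinite (N - {..x})" by (simp add: Diff_infinite_finite)
  moreover have "N - {..x} = {y\<in>N. x < y}" by auto
  ultimately show ?thesis by simp
qed

lemma Inf_nat_less: "(y :: nat) \<in> N \<Longrightarrow> y \<noteq> Inf N \<Longrightarrow> Inf N < y"
  using wellorder_Inf_le1[of y N] by simp

lemma strict_mono_infinite_image:
  "strict_mono (xs :: nat \<Rightarrow> nat) \<Longrightarrow> infinite K \<Longrightarrow> infinite (xs ` K)"
  by (metis finite_imageD strict_mono_imp_inj_on)

lemma finite_subset_range_lessThan:
  fixes xs :: "nat \<Rightarrow> 'a"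
  assumes "finite s" "s \<subseteq> range xs"
  obtains k where "s \<subseteq> xs ` {..<k}"
proof -
  obtain K where "finite K" "s = xs ` K"
    using assms by (meson finite_subset_image)
  then have "s \<subseteq> xs ` {..<Suc (Max (insert 0 K))}"
    by (auto simp: less_Suc_eq_le)
  then show thesis by (rule that)
qed

lemma barrier_finite: "barrier B \<Longrightarrow> s \<in> B \<Longrightarrow> finite s"
  unfolding barrier_def by blast

lemma barrier_antichain: "barrier B \<Longrightarrow> s \<in> B \<Longrightarrow> t \<in> B \<Longrightarrow> s \<subseteq> t \<Longrightarrow> s = t"
  unfolding barrier_def by blast

lemma barrier_nonempty:
  assumes "barrier B" "s \<in> B" shows "s \<noteq> {}"
proof
  assume "s = {}"
  have "infinite B" using assms(1) unfolding barrier_def by blast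
  then have "\<not> B \<subseteq> {{}}" using finite_subset by auto
  then obtain t where "t \<in> B" "t \<noteq> {}" by blast
  then show False
    using barrier_antichain[OF assms] \<open>s = {}\<close> by blast
qed

lemma barrier_nonempty_member:
  assumes "barrier B" obtains s where "s \<in> B" "s \<noteq> {}"
proof -
  have "B \<noteq> {}" using assms unfolding barrier_def by auto
  then show thesis using that barrier_nonempty[OF assms] by blast
qed

lemma barrier_Union_infinite: "barrier B \<Longrightarrow> infinite (\<Union>B)"
  unfolding barrier_def using finite_UnionD by blast

lemma barrierI:
  assumes N: "infinite N" "\<Union>B \<subseteq> N"
    and fin: "\<And>s. s \<in> B \<Longrightarrow> finite s \<and> s \<noteq> {}"
    and antichain: "\<And>s t. s \<in> B \<Longrightarrow> t \<in> B \<Longrightarrow> s \<subseteq> t \<Longrightarrow> s = t"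
    and prefix: "\<And>X. X \<subseteq> N \<Longrightarrow> infinite X \<Longrightarrow> \<exists>s\<in>B. init_seg s X"
  shows "barrier B"
proof -
  have "infinite B"
  proof
    assume "finite B"
    then have "finite (\<Union>B)" using fin by blast
    then obtain m where m: "\<And>y. y \<in> \<Union>B \<Longrightarrow> y \<le> m"
      by (meson finite_nat_set_iff_bounded_le)
    obtain s where "s \<in> B" "init_seg s {y\<in>N. m < y}"
      using prefix[of "{y\<in>N. m < y}"] infinite_tail[OF N(1), of m] by blast
    moreover obtain y where "y \<in> s" using fin \<open>s \<in> B\<close> by blast
    ultimately have "m < y" "y \<le> m" using m init_seg_subset by fastforce+
    then show False by simp
  qed
  moreover have "\<not> s \<subset> t" if "s \<in> B" "t \<in> B" for s t
    using antichain[OF that] by blast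
  moreover have "\<exists>s\<in>B. s \<noteq> {} \<and> init_seg s X" if X: "X \<subseteq> \<Union>B" "infinite X" for X
  proof -
    have "X \<subseteq> N" using X(1) N(2) by (rule subset_trans)
    then obtain s where "s \<in> B" "init_seg s X" using prefix X(2) by blast
    then show ?thesis using fin by blast
  qed
  ultimately show ?thesis
    unfolding barrier_def using fin by blast
qed

definition barrier_prefix :: "nat set set \<Rightarrow> nat set \<Rightarrow> nat set" where
  "barrier_prefix B X = (THE s. s \<in> B \<and> init_seg s X)"

lemma barrier_init_seg_unique:
  "barrier B \<Longrightarrow> s \<in> B \<Longrightarrow> t \<in> B \<Longrightarrow> init_seg s X \<Longrightarrow> init_seg t X \<Longrightarrow> s = t"
  using init_seg_linear barrier_antichain by metis

lemma barrier_prefix_eq: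
  assumes "barrier B" "s \<in> B" "init_seg s X"
  shows "barrier_prefix B X = s"
  unfolding barrier_prefix_def
  using assms barrier_init_seg_unique[OF assms(1)] by (intro the_equality) auto

lemma barrier_prefix:
  assumes "barrier B" "X \<subseteq> \<Union>B" "infinite X"
  shows "barrier_prefix B X \<in> B" "init_seg (barrier_prefix B X) X"
proof -
  obtain s where "s \<in> B" "init_seg s X"
    using assms unfolding barrier_def by blast
  then show "barrier_prefix B X \<in> B" "init_seg (barrier_prefix B X) X"
    using barrier_prefix_eq[OF assms(1)] by auto
qed

lemma shift_relI:
  assumes "finite t" "\<forall>y\<in>t. x < y" "init_seg s (insert x t)" "s \<noteq> insert x t"
  shows "s \<lhd> t"
proof -
  have "Min (insert x t) = x"
    using assms(1,2) by (simp add: Min_insert2 less_imp_le)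
  moreover have "x \<notin> t" using assms(2) by blast
  ultimately show ?thesis
    unfolding shift_rel_def using assms(1,3,4) by (intro exI[of _ "insert x t"]) auto
qed

lemma shift_relE:
  assumes "s \<lhd> t" "s \<noteq> {}"
  obtains x where "x \<in> s" "\<forall>y\<in>t. x < y" "init_seg s (insert x t)"
proof -
  obtain r where r: "finite r" "init_seg s r" "t = r - {Min r}"
    using assms(1) unfolding shift_rel_def by blast
  have "r \<noteq> {}" using assms(2) r(2) init_seg_subset by blast
  have "Min r \<in> s"
    using assms(2) r(1,2) Min_in[OF r(1) \<open>r \<noteq> {}\<close>] Min_le[OF r(1)] init_seg_subset
    unfolding init_seg_def by (metis all_not_in_conv le_neq_implies_less subsetD)
  moreover have "\<forall>y\<in>t. Min r < y" using r(1,3) by (simp add: order_less_le)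
  moreover have "insert (Min r) t = r" using r(3) \<open>Min r \<in> s\<close> r(2) init_seg_subset by blast
  ultimately show thesis using that r(2) by metis
qed

lemma barrier_prefix_insert:
  assumes B: "barrier B" and L: "L \<subseteq> \<Union>B" "infinite L" and x: "x \<in> \<Union>B" "\<forall>y\<in>L. x < y"
  shows "init_seg (barrier_prefix B (insert x L)) (insert x (barrier_prefix B L))"
    and "barrier_prefix B (insert x L) \<lhd> barrier_prefix B L"
proof -
  let ?t = "barrier_prefix B L" and ?s = "barrier_prefix B (insert x L)"
  have s: "?s \<in> B" "init_seg ?s (insert x L)"
    using barrier_prefix[OF B] L x by auto
  have t: "?t \<in> B" "init_seg ?t L" "finite ?t"
    using barrier_prefix[OF B L] barrier_finite[OF B] by auto
  have xt: "\<forall>y\<in>?t. x < y" using t(2) x(2) init_seg_subset by blast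
  have xt_seg: "init_seg (insert x ?t) (insert x L)"
    using init_seg_insert[OF t(2) x(2)] .
  have "\<not> insert x ?t \<subseteq> ?s"
  proof
    assume "insert x ?t \<subseteq> ?s"
    then have "?t = ?s" using barrier_antichain[OF B t(1) s(1)] by blast
    then show False using \<open>insert x ?t \<subseteq> ?s\<close> xt by blast
  qed
  then have "?s \<subseteq> insert x ?t" "?s \<noteq> insert x ?t"
    using init_seg_linear[OF s(2) xt_seg] by auto
  then show "init_seg ?s (insert x ?t)"
    and "?s \<lhd> ?t"
    using init_seg_of_subset[OF s(2) xt_seg] shift_relI[OF t(3) xt] by auto
qed

definition extensions :: "nat set set \<Rightarrow> nat set \<Rightarrow> nat set set" where
  "extensions B u = {t\<in>B. init_seg u t \<and> u \<noteq> t}"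

lemma barrier_prefix_extension:
  assumes B: "barrier B" and u: "insert x u \<in> B" and L: "init_seg u L" "x \<notin> L" "L \<subseteq> \<Union>B" "infinite L"
  shows "barrier_prefix B L \<in> extensions B u"
proof -
  let ?t = "barrier_prefix B L"
  have t: "?t \<in> B" "init_seg ?t L" using barrier_prefix[OF B L(3,4)] .
  have "\<not> ?t \<subseteq> u"
  proof
    assume "?t \<subseteq> u"
    then have "?t = insert x u" using barrier_antichain[OF B t(1) u] by blast
    then show False using \<open>?t \<subseteq> u\<close> L(2) init_seg_subset[OF t(2)] by blast
  qed
  then have "u \<subseteq> ?t" using init_seg_linear[OF L(1) t(2)] by blast
  then show ?thesis
    using init_seg_of_subset[OF L(1) t(2)] t(1) \<open>\<not> ?t \<subseteq> u\<close> unfolding extensions_def by blast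
qed

lemma barrier_section:
  assumes B: "barrier B" and x: "x \<in> \<Union>B" "{x} \<notin> B"
    and N: "N \<subseteq> \<Union>B" "infinite N" "\<forall>y\<in>N. x < y"
  shows "barrier {u. u \<subseteq> N \<and> insert x u \<in> B}"
proof (rule barrierI[OF N(2)])
  fix X assume X: "X \<subseteq> N" "infinite X"
  let ?s = "barrier_prefix B (insert x X)"
  have s: "?s \<in> B" "init_seg ?s (insert x X)"
    using barrier_prefix[OF B] X N(1) x(1) by auto
  have "\<forall>y\<in>X. x < y" using X(1) N(3) by blast
  then have "x \<in> ?s" "init_seg (?s - {x}) X"
    using init_seg_insert_dest[OF s(2)] barrier_nonempty[OF B s(1)] by auto
  moreover have "?s - {x} \<subseteq> N" using s(2) X(1) init_seg_subset by blast
  ultimately show "\<exists>u\<in>{u. u \<subseteq> N \<and> insert x u \<in> B}. init_seg u X"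
    using s(1) by (intro bexI[of _ "?s - {x}"]) (auto simp: insert_absorb)
next
  fix u v assume "u \<in> {u. u \<subseteq> N \<and> insert x u \<in> B}" "v \<in> {u. u \<subseteq> N \<and> insert x u \<in> B}" "u \<subseteq> v"
  moreover have "x \<notin> u" "x \<notin> v" using calculation N(3) by blast+
  ultimately have "insert x u = insert x v" "x \<notin> u" "x \<notin> v"
    using barrier_antichain[OF B, of "insert x u" "insert x v"] by blast+
  then show "u = v" by (metis Diff_insert_absorb)
next
  fix u assume "u \<in> {u. u \<subseteq> N \<and> insert x u \<in> B}"
  then show "finite u \<and> u \<noteq> {}"
    using barrier_finite[OF B, of "insert x u"] x(2) by auto
qed blast

lemma barrier_singletons: "barrier (range (\<lambda>n. {n}))"
proof (rule barrierI[of UNIV])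
  fix X :: "nat set" assume "infinite X"
  then have "Inf X \<in> X" "\<forall>y\<in>X. Inf X \<le> y"
    using Inf_nat_def1 wellorder_Inf_le1 by (auto simp: infinite_imp_nonempty)
  then show "\<exists>s\<in>range (\<lambda>n. {n}). init_seg s X"
    unfolding init_seg_def by (intro bexI[of _ "{Inf X}"]) auto
qed auto

lemma lex_rel_singletons: "(lex_rel (range (\<lambda>n. {n})), natLeq) \<in> ordLeq"
proof -
  have "lex_rel (range (\<lambda>n. {n})) = dir_image natLeq (\<lambda>n. {n})"
    unfolding lex_rel_def dir_image_def natLeq_def by (auto simp: lexord_cons_cons)
  moreover have "(natLeq, dir_image natLeq (\<lambda>n. {n})) \<in> ordIso"
    by (rule dir_image_ordIso[OF natLeq_Well_order]) (auto simp: inj_on_def)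
  ultimately show ?thesis
    using ordIso_symmetric ordIso_imp_ordLeq by metis
qed

lemma shift_rel_singleton: "{m} \<lhd> {n} \<Longrightarrow> m < n"
  by (erule shift_relE) auto

section \<open>Nash-Williams' partition theorem\<close>

text \<open>Fusion: \<open>xs k\<close> is picked from the \<open>k\<close>-th reservoir, which is then shrunk so that the
  invariant \<open>I\<close> holds of the points picked so far.\<close>

lemma fusion:
  fixes I :: "nat set \<Rightarrow> nat set \<Rightarrow> bool"
  assumes start: "I {} M" "infinite M"
    and step: "\<And>p M. I p M \<Longrightarrow> infinite M \<Longrightarrow>
      \<exists>x\<in>M. \<exists>N\<subseteq>{y\<in>M. x < y}. infinite N \<and> I (insert x p) N"
  shows "\<exists>xs :: nat \<Rightarrow> nat. strict_mono xs \<and> range xs \<subseteq> M \<and>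
    (\<forall>k. \<exists>N. I (xs ` {..<k}) N \<and> infinite N \<and> xs ` {k..} \<subseteq> N)"
proof -
  define nxt where "nxt p M = (SOME xN. fst xN \<in> M \<and> snd xN \<subseteq> {y\<in>M. fst xN < y} \<and>
    infinite (snd xN) \<and> I (insert (fst xN) p) (snd xN))" for p M
  have nxt: "fst (nxt p M) \<in> M \<and> snd (nxt p M) \<subseteq> {y\<in>M. fst (nxt p M) < y} \<and>
      infinite (snd (nxt p M)) \<and> I (insert (fst (nxt p M)) p) (snd (nxt p M))"
    if "I p M" "infinite M" for p M
  proof -
    from step[OF that] obtain x N
      where "x \<in> M" "N \<subseteq> {y\<in>M. x < y}" "infinite N" "I (insert x p) N"
      by blast
    then have "\<exists>xN. fst xN \<in> M \<and> snd xN \<subseteq> {y\<in>M. fst xN < y} \<and>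
        infinite (snd xN) \<and> I (insert (fst xN) p) (snd xN)"
      by (intro exI[of _ "(x, N)"]) simp
    from someI_ex[OF this] show ?thesis unfolding nxt_def .
  qed
  define st where "st = rec_nat ({}, M) (\<lambda>_ (p, M). (insert (fst (nxt p M)) p, snd (nxt p M)))"
  define xs where "xs k = fst (nxt (fst (st k)) (snd (st k)))" for k
  define Ms where "Ms k = snd (st k)" for k
  have st_Suc: "st (Suc k) = (insert (xs k) (fst (st k)), snd (nxt (fst (st k)) (Ms k)))" for k
    unfolding st_def xs_def Ms_def by (simp add: case_prod_beta)
  have inv: "fst (st k) = xs ` {..<k} \<and> I (xs ` {..<k}) (Ms k) \<and> infinite (Ms k)" for k
  proof (induction k)
    case 0
    then show ?case using start unfolding st_def Ms_def by simp
  next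
    case (Suc k)
    then show ?case using nxt[of "fst (st k)" "Ms k"] st_Suc[of k]
      unfolding xs_def Ms_def by (auto simp: lessThan_Suc)
  qed
  have xs_Ms: "xs k \<in> Ms k" and Ms_Suc: "Ms (Suc k) \<subseteq> {y\<in>Ms k. xs k < y}" for k
    using nxt[of "fst (st k)" "Ms k"] inv[of k] st_Suc[of k] unfolding xs_def Ms_def by auto
  have "strict_mono xs"
    unfolding strict_mono_Suc_iff using xs_Ms Ms_Suc by blast
  moreover have tails: "xs ` {k..} \<subseteq> Ms k" for k
  proof -
    have "Ms j \<subseteq> Ms k" if "k \<le> j" for j
      using Ms_Suc by (intro lift_Suc_antimono_le[of Ms, OF _ that]) blast
    then show ?thesis using xs_Ms by blast
  qed
  moreover have "range xs \<subseteq> M"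
    using tails[of 0] unfolding Ms_def st_def by simp
  ultimately show ?thesis using inv by (intro exI[of _ xs]) blast
qed

text \<open>The accept/reject terminology of Galvin and Prikry's proof of Nash-Williams' theorem.\<close>

definition accepts :: "nat set set \<Rightarrow> nat set \<Rightarrow> nat set \<Rightarrow> bool" where
  "accepts F M s \<longleftrightarrow> (\<forall>L\<subseteq>M. infinite L \<longrightarrow> (\<exists>u. init_seg u L \<and> s \<union> u \<in> F))"

definition rejects :: "nat set set \<Rightarrow> nat set \<Rightarrow> nat set \<Rightarrow> bool" where
  "rejects F M s \<longleftrightarrow> (\<forall>N\<subseteq>M. infinite N \<longrightarrow> \<not> accepts F N s)"

lemma accepts_subset: "accepts F M s \<Longrightarrow> N \<subseteq> M \<Longrightarrow> accepts F N s"
  unfolding accepts_def by blast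

lemma rejects_subset: "rejects F M s \<Longrightarrow> N \<subseteq> M \<Longrightarrow> rejects F N s"
  unfolding rejects_def by blast

lemma mem_imp_accepts: "s \<in> F \<Longrightarrow> accepts F M s"
  unfolding accepts_def by (auto intro!: exI[of _ "{}"] simp: init_seg_def)

lemma rejects_imp_not_mem: "rejects F M s \<Longrightarrow> infinite M \<Longrightarrow> s \<notin> F"
  unfolding rejects_def using mem_imp_accepts by blast

lemma accepts_or_rejects_subset:
  "accepts F M s \<or> rejects F M s \<Longrightarrow> N \<subseteq> M \<Longrightarrow> accepts F N s \<or> rejects F N s"
  using accepts_subset rejects_subset by blast

lemma accepts_or_rejects:
  "infinite M \<Longrightarrow> \<exists>N\<subseteq>M. infinite N \<and> (accepts F N s \<or> rejects F N s)"
  unfolding rejects_def by blast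

lemma accepts_if_tails_accept:
  assumes "\<forall>n\<in>N. accepts F {y\<in>N. n < y} (insert n s)"
  shows "accepts F N s"
  unfolding accepts_def
proof (intro allI impI)
  fix L assume L: "L \<subseteq> N" "infinite L"
  define n where "n = Inf L"
  have n: "n \<in> L" "\<forall>y\<in>L - {n}. n < y"
    using L(2) Inf_nat_def1[of L] Inf_nat_less[of _ L] unfolding n_def by auto
  then have "L - {n} \<subseteq> {y\<in>N. n < y}" using L(1) by blast
  then obtain u where u: "init_seg u (L - {n})" "insert n s \<union> u \<in> F"
    using assms n(1) L infinite_remove[OF L(2)] unfolding accepts_def by blast
  have "init_seg (insert n u) L"
    using init_seg_insert[OF u(1) n(2)] n(1) by (simp add: insert_absorb)
  then show "\<exists>u. init_seg u L \<and> s \<union> u \<in> F"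
    using u(2) by (intro exI[of _ "insert n u"]) simp
qed

lemma deciding_sequence:
  assumes M: "infinite M"
  shows "\<exists>xs :: nat \<Rightarrow> nat. strict_mono xs \<and> range xs \<subseteq> M \<and> (\<forall>k.
    accepts F (xs ` {Suc k..}) (insert (xs k) s) \<or> rejects F (xs ` {Suc k..}) (insert (xs k) s))"
proof -
  define I where "I p M' \<longleftrightarrow> (\<forall>x\<in>p. accepts F M' (insert x s) \<or> rejects F M' (insert x s))"
    for p M'
  have step: "\<exists>x\<in>M'. \<exists>N\<subseteq>{y\<in>M'. x < y}. infinite N \<and> I (insert x p) N"
    if I: "I p M'" and M': "infinite M'" for p M'
  proof -
    obtain x where "x \<in> M'" using M' by (metis finite.emptyI ex_in_conv)
    obtain N where N: "N \<subseteq> {y\<in>M'. x < y}" "infinite N"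
        "accepts F N (insert x s) \<or> rejects F N (insert x s)"
      using accepts_or_rejects[OF infinite_tail[OF M', of x], of F "insert x s"] by blast
    have "N \<subseteq> M'" using N(1) by blast
    then have "I (insert x p) N"
      using I N(3) accepts_or_rejects_subset unfolding I_def by blast
    then show ?thesis using \<open>x \<in> M'\<close> N(1,2) by blast
  qed
  have "I {} M" unfolding I_def by simp
  then have "\<exists>xs :: nat \<Rightarrow> nat. strict_mono xs \<and> range xs \<subseteq> M \<and>
      (\<forall>k. \<exists>N. I (xs ` {..<k}) N \<and> infinite N \<and> xs ` {k..} \<subseteq> N)"
    using M step by (rule fusion)
  then obtain xs :: "nat \<Rightarrow> nat" where "strict_mono xs" "range xs \<subseteq> M"
    and stage: "\<forall>k. \<exists>N. I (xs ` {..<k}) N \<and> infinite N \<and> xs ` {k..} \<subseteq> N"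
    by blast
  moreover have "accepts F (xs ` {Suc k..}) (insert (xs k) s) \<or>
      rejects F (xs ` {Suc k..}) (insert (xs k) s)" for k
  proof -
    obtain N where "I (xs ` {..<Suc k}) N" "xs ` {Suc k..} \<subseteq> N"
      using spec[OF stage, of "Suc k"] by blast
    then show ?thesis using accepts_or_rejects_subset unfolding I_def by blast
  qed
  ultimately show ?thesis by blast
qed

lemma rejects_insert:
  assumes M: "infinite M" and rej: "rejects F M s"
  shows "\<exists>N\<subseteq>M. infinite N \<and> (\<forall>n\<in>N. rejects F {y\<in>N. n < y} (insert n s))"
proof -
  obtain xs :: "nat \<Rightarrow> nat" where mono: "strict_mono xs" and range: "range xs \<subseteq> M"
    and decided: "\<And>k. accepts F (xs ` {Suc k..}) (insert (xs k) s) \<or>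
      rejects F (xs ` {Suc k..}) (insert (xs k) s)"
    using deciding_sequence[OF M, of F s] by blast
  have tail_above: "{y\<in>xs ` K. xs k < y} \<subseteq> xs ` {Suc k..}" for k K
    using strict_mono_less[OF mono] by (auto simp: Suc_le_eq)
  define K where "K = {k. accepts F (xs ` {Suc k..}) (insert (xs k) s)}"
  have "finite K"
  proof (rule ccontr)
    assume "infinite K"
    have "accepts F {y\<in>xs ` K. n < y} (insert n s)" if n: "n \<in> xs ` K" for n
    proof -
      obtain k where "k \<in> K" "n = xs k" using n by blast
      then show ?thesis
        using accepts_subset[OF _ tail_above[of K k]] unfolding K_def by blast
    qed
    then have "accepts F (xs ` K) s"
      by (intro accepts_if_tails_accept) blast
    moreover have "xs ` K \<subseteq> M" using range by blast
    ultimately show False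
      using rej strict_mono_infinite_image[OF mono \<open>infinite K\<close>] unfolding rejects_def by blast
  qed
  show ?thesis
  proof (intro exI conjI ballI)
    show "xs ` (- K) \<subseteq> M" using range by blast
    show "infinite (xs ` (- K))"
      using strict_mono_infinite_image[OF mono] \<open>finite K\<close>
      by (simp add: Compl_eq_Diff_UNIV Diff_infinite_finite)
    fix n assume "n \<in> xs ` (- K)"
    then obtain k where "k \<notin> K" "n = xs k" by blast
    then show "rejects F {y\<in>xs ` (- K). n < y} (insert n s)"
      using decided[of k] rejects_subset[OF _ tail_above[of "- K" k]] unfolding K_def by blast
  qed
qed

lemma rejects_insert_finite:
  assumes "finite S" "infinite M" "\<forall>s\<in>S. rejects F M s"
  shows "\<exists>N\<subseteq>M. infinite N \<and> (\<forall>n\<in>N. \<forall>s\<in>S. rejects F {y\<in>N. n < y} (insert n s))"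
  using assms
proof (induction S arbitrary: M rule: finite_induct)
  case empty
  then show ?case by blast
next
  case (insert s S)
  have "\<forall>s\<in>S. rejects F M s" using insert.prems(2) by blast
  from insert.IH[OF insert.prems(1) this] obtain N1 where N1: "N1 \<subseteq> M" "infinite N1"
    "\<forall>n\<in>N1. \<forall>s\<in>S. rejects F {y\<in>N1. n < y} (insert n s)"
    by blast
  have "rejects F N1 s" using insert.prems(2) rejects_subset[OF _ N1(1)] by blast
  from rejects_insert[OF N1(2) this] obtain N2 where N2: "N2 \<subseteq> N1" "infinite N2"
    "\<forall>n\<in>N2. rejects F {y\<in>N2. n < y} (insert n s)"
    by blast
  have "rejects F {y\<in>N2. n < y} (insert n t)" if "n \<in> N2" "t \<in> S" for n t
    using that N2(1) by (intro rejects_subset[OF N1(3)[rule_format]]) auto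
  then show ?case using N1(1) N2 by (intro exI[of _ N2]) auto
qed

lemma rejects_subsets_insert:
  assumes p: "finite p" and M: "infinite M" and rej: "\<forall>s\<subseteq>p. rejects F M s"
  shows "\<exists>x\<in>M. \<exists>N\<subseteq>{y\<in>M. x < y}. infinite N \<and> (\<forall>s\<subseteq>insert x p. rejects F N s)"
proof -
  obtain N where N: "N \<subseteq> M" "infinite N"
    "\<forall>n\<in>N. \<forall>s\<in>Pow p. rejects F {y\<in>N. n < y} (insert n s)"
    using rejects_insert_finite[of "Pow p" M F] p M rej by auto
  obtain x where "x \<in> N" using N(2) by (metis finite.emptyI ex_in_conv)
  have "rejects F {y\<in>N. x < y} s" if "s \<subseteq> insert x p" for s
  proof (cases "x \<in> s")
    case True
    then show ?thesis
      using N(3) \<open>x \<in> N\<close> that by (metis Pow_iff insert_Diff subset_insert_iff)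
  next
    case False
    with that have "rejects F M s" using rej by (simp add: subset_insert)
    moreover have "{y\<in>N. x < y} \<subseteq> M" using N(1) by blast
    ultimately show ?thesis by (rule rejects_subset)
  qed
  moreover have "{y\<in>N. x < y} \<subseteq> {y\<in>M. x < y}" "x \<in> M"
    using N(1) \<open>x \<in> N\<close> by blast+
  ultimately show ?thesis
    using infinite_tail[OF N(2), of x] by blast
qed

lemma rejects_imp_avoiding_subset:
  assumes M: "infinite M" and rej: "rejects F M {}"
  shows "\<exists>N\<subseteq>M. infinite N \<and> (\<forall>s\<subseteq>N. finite s \<longrightarrow> s \<notin> F)"
proof -
  define I where "I p M' \<longleftrightarrow> finite p \<and> (\<forall>s\<subseteq>p. rejects F M' s)" for p M'
  have start: "I {} M" using rej unfolding I_def by simp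
  have step: "\<exists>x\<in>M'. \<exists>N\<subseteq>{y\<in>M'. x < y}. infinite N \<and> I (insert x p) N"
    if "I p M'" "infinite M'" for p M'
    using rejects_subsets_insert[of p M' F] that unfolding I_def by auto
  have "\<exists>xs :: nat \<Rightarrow> nat. strict_mono xs \<and> range xs \<subseteq> M \<and>
      (\<forall>k. \<exists>N. I (xs ` {..<k}) N \<and> infinite N \<and> xs ` {k..} \<subseteq> N)"
    using start M step by (rule fusion)
  then obtain xs :: "nat \<Rightarrow> nat" where "strict_mono xs" "range xs \<subseteq> M"
    and stage: "\<forall>k. \<exists>N. I (xs ` {..<k}) N \<and> infinite N \<and> xs ` {k..} \<subseteq> N"
    by blast
  moreover have "\<forall>s\<subseteq>range xs. finite s \<longrightarrow> s \<notin> F"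
  proof (intro allI impI)
    fix s assume s: "s \<subseteq> range xs" "finite s"
    obtain k where "s \<subseteq> xs ` {..<k}"
      using finite_subset_range_lessThan[OF s(2,1)] .
    then show "s \<notin> F"
      using spec[OF stage, of k] rejects_imp_not_mem unfolding I_def by blast
  qed
  ultimately show ?thesis
    using strict_mono_infinite_image[of xs UNIV] by auto
qed

theorem nash_williams:
  assumes M: "infinite M"
  obtains N where "N \<subseteq> M" "infinite N"
    "(\<forall>s\<subseteq>N. finite s \<longrightarrow> s \<notin> F) \<or> (\<forall>L\<subseteq>N. infinite L \<longrightarrow> (\<exists>u\<in>F. init_seg u L))"
proof (cases "\<exists>N\<subseteq>M. infinite N \<and> accepts F N {}")
  case True
  then obtain N where N: "N \<subseteq> M" "infinite N" "accepts F N {}" by blast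
  then have "\<forall>L\<subseteq>N. infinite L \<longrightarrow> (\<exists>u\<in>F. init_seg u L)"
    unfolding accepts_def by auto
  with N show thesis using that by blast
next
  case False
  then have "rejects F M {}" unfolding rejects_def by blast
  with rejects_imp_avoiding_subset[OF M] show thesis using that by blast
qed

definition thin :: "nat set set \<Rightarrow> bool" where
  "thin T \<longleftrightarrow> (\<forall>t\<in>T. finite t) \<and> (\<forall>s\<in>T. \<forall>t\<in>T. init_seg s t \<longrightarrow> s = t)"

lemma barrier_thin: "barrier B \<Longrightarrow> thin B"
  unfolding thin_def by (meson barrier_antichain barrier_finite init_seg_subset)

lemma thin_extensions_diff:
  assumes B: "barrier B" shows "thin ((\<lambda>t. t - u) ` extensions B u)"
  unfolding thin_def
proof (intro conjI ballI impI)
  fix s assume "s \<in> (\<lambda>t. t - u) ` extensions B u"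
  then show "finite s" using barrier_finite[OF B] unfolding extensions_def by auto
next
  fix s t assume "s \<in> (\<lambda>t. t - u) ` extensions B u" "t \<in> (\<lambda>t. t - u) ` extensions B u"
    and "init_seg s t"
  then obtain s' t' where "s' \<in> B" "t' \<in> B" "u \<subseteq> s'" "u \<subseteq> t'" "s = s' - u" "t = t' - u"
    "s' - u \<subseteq> t' - u"
    unfolding extensions_def using init_seg_subset by blast
  then show "s = t" using barrier_antichain[OF B, of s' t'] by blast
qed

lemma thin_mem_if_initial_segments:
  assumes T: "thin T" and F: "F \<subseteq> T" and N: "infinite N"
    and all: "\<forall>L\<subseteq>N. infinite L \<longrightarrow> (\<exists>u\<in>F. init_seg u L)"
    and t: "t \<in> T" "t \<subseteq> N"
  shows "t \<in> F"
proof -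
  define L where "L = t \<union> {y\<in>N. Max t < y}"
  have "L \<subseteq> N" "infinite L"
    using t(2) infinite_tail[OF N] unfolding L_def by auto
  then obtain u where u: "u \<in> F" "init_seg u L" using all by blast
  have "init_seg t L"
    unfolding L_def using T t(1) init_seg_Un_tail unfolding thin_def by blast
  then have "init_seg u t \<or> init_seg t u"
    using init_seg_linear[OF u(2)] init_seg_of_subset u(2) by metis
  then have "u = t" using T F t(1) u(1) unfolding thin_def by blast
  then show ?thesis using u(1) by simp
qed

lemma thin_colouring_homogeneous:
  assumes T: "thin T" and S: "finite S" and M: "infinite M" and c: "\<forall>t\<in>T. t \<subseteq> M \<longrightarrow> c t \<in> S"
  shows "\<exists>N\<subseteq>M. infinite N \<and> (\<exists>a. \<forall>t\<in>T. t \<subseteq> N \<longrightarrow> c t = a)"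
  using S M c
proof (induction S arbitrary: M rule: finite_induct)
  case empty
  then show ?case by blast
next
  case (insert a S)
  obtain N where N: "N \<subseteq> M" "infinite N"
    and alt: "(\<forall>s\<subseteq>N. finite s \<longrightarrow> s \<notin> {t\<in>T. c t = a}) \<or>
      (\<forall>L\<subseteq>N. infinite L \<longrightarrow> (\<exists>u\<in>{t\<in>T. c t = a}. init_seg u L))"
    using nash_williams[OF insert.prems(1), where F = "{t\<in>T. c t = a}"] by blast
  from alt show ?case
  proof
    assume none: "\<forall>s\<subseteq>N. finite s \<longrightarrow> s \<notin> {t\<in>T. c t = a}"
    have "c t \<in> S" if "t \<in> T" "t \<subseteq> N" for t
    proof -
      have "c t \<in> insert a S" using insert.prems(2) that N(1) by blast
      moreover have "finite t" using T that(1) unfolding thin_def by blast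
      then have "c t \<noteq> a" using none that by blast
      ultimately show ?thesis by blast
    qed
    then have "\<forall>t\<in>T. t \<subseteq> N \<longrightarrow> c t \<in> S" by blast
    then obtain N' where "N' \<subseteq> N" "infinite N'" "\<exists>a. \<forall>t\<in>T. t \<subseteq> N' \<longrightarrow> c t = a"
      using insert.IH[OF N(2)] by blast
    then show ?case using N(1) by blast
  next
    assume "\<forall>L\<subseteq>N. infinite L \<longrightarrow> (\<exists>u\<in>{t\<in>T. c t = a}. init_seg u L)"
    then have "c t = a" if "t \<in> T" "t \<subseteq> N" for t
      using thin_mem_if_initial_segments[OF T _ N(2), of "{t\<in>T. c t = a}"] that by blast
    then show ?case using N by (intro exI[of _ N] conjI exI[of _ a]) auto
  qed
qed

lemma thin_colourings_homogeneous:
  assumes "finite U" "infinite M"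
    and "\<And>u. u \<in> U \<Longrightarrow> thin (T u) \<and> finite (S u) \<and> (\<forall>t\<in>T u. t \<subseteq> M \<longrightarrow> c u t \<in> S u)"
  shows "\<exists>N\<subseteq>M. infinite N \<and> (\<forall>u\<in>U. \<exists>a. \<forall>t\<in>T u. t \<subseteq> N \<longrightarrow> c u t = a)"
  using assms
proof (induction U arbitrary: M rule: finite_induct)
  case empty
  then show ?case by blast
next
  case (insert u U)
  obtain N1 where N1: "N1 \<subseteq> M" "infinite N1" "\<forall>u\<in>U. \<exists>a. \<forall>t\<in>T u. t \<subseteq> N1 \<longrightarrow> c u t = a"
    using insert.IH[OF insert.prems(1)] insert.prems(2) by blast
  have "thin (T u)" "finite (S u)" "\<forall>t\<in>T u. t \<subseteq> N1 \<longrightarrow> c u t \<in> S u"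
    using insert.prems(2)[of u] N1(1) by auto
  from thin_colouring_homogeneous[OF this(1,2) N1(2) this(3)]
  obtain N2 where N2: "N2 \<subseteq> N1" "infinite N2" "\<exists>a. \<forall>t\<in>T u. t \<subseteq> N2 \<longrightarrow> c u t = a"
    by blast
  have "\<forall>u\<in>U. \<exists>a. \<forall>t\<in>T u. t \<subseteq> N2 \<longrightarrow> c u t = a"
    using N1(3) N2(1) by (meson subset_trans)
  then show ?case using N1(1) N2 by (intro exI[of _ N2]) auto
qed

section \<open>Well-foundedness of barrier descent\<close>

definition barrier_descent :: "(nat set set \<times> nat set set) set" where
  "barrier_descent = {(B', B). barrier B' \<and> barrier B \<and>
     (\<exists>n. \<forall>s\<in>B'. (\<forall>y\<in>s. n < y) \<and> insert n s \<in> B)}"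

lemma barrier_no_infinite_branch:
  assumes B: "barrier B" and n: "strict_mono n"
    and ext: "\<And>k. \<exists>t. t \<noteq> {} \<and> (\<forall>y\<in>t. n k < y) \<and> t \<union> n ` {..<Suc k} \<in> B"
  shows False
proof -
  have "range n \<subseteq> \<Union>B"
  proof
    fix y assume "y \<in> range n"
    then obtain k where "y = n k" by blast
    moreover obtain t where "t \<union> n ` {..<Suc k} \<in> B" using ext by blast
    ultimately show "y \<in> \<Union>B" by blast
  qed
  moreover have "infinite (range n)" using strict_mono_infinite_image[OF n, of UNIV] by simp
  ultimately obtain s0 where s0: "s0 \<in> B" "init_seg s0 (range n)"
    using B unfolding barrier_def by blast
  obtain k where k: "s0 \<subseteq> n ` {..<k}"
    using finite_subset_range_lessThan[OF barrier_finite[OF B s0(1)] init_seg_subset[OF s0(2)]] .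
  obtain t where t: "t \<noteq> {}" "\<forall>y\<in>t. n k < y" "t \<union> n ` {..<Suc k} \<in> B"
    using ext by blast
  then obtain y where "y \<in> t" by blast
  then have "y \<notin> n ` {..<k}" using t(2) strict_mono_less[OF n] by fastforce
  have "s0 \<subseteq> t \<union> n ` {..<Suc k}" using k by (auto simp: lessThan_Suc)
  then have "s0 = t \<union> n ` {..<Suc k}"
    using barrier_antichain[OF B s0(1) t(3)] by blast
  then show False using \<open>y \<in> t\<close> \<open>y \<notin> n ` {..<k}\<close> k by blast
qed

lemma wf_barrier_descent: "wf barrier_descent"
proof (rule ccontr)
  assume "\<not> wf barrier_descent"
  then obtain F where F: "\<And>i. (F (Suc i), F i) \<in> barrier_descent"
    unfolding wf_iff_no_infinite_down_chain by blast
  then have bar: "barrier (F i)" for i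
    unfolding barrier_descent_def by blast
  have "\<forall>i. \<exists>n. \<forall>s\<in>F (Suc i). (\<forall>y\<in>s. n < y) \<and> insert n s \<in> F i"
    using F unfolding barrier_descent_def by blast
  from choice[OF this] obtain n where n: "\<forall>i. \<forall>s\<in>F (Suc i). (\<forall>y\<in>s. n i < y) \<and> insert (n i) s \<in> F i"
    ..
  have lift: "s \<union> n ` {..<k} \<in> F 0" if "s \<in> F k" for k s
    using that
  proof (induction k arbitrary: s)
    case 0
    then show ?case by simp
  next
    case (Suc k)
    then have "insert (n k) s \<union> n ` {..<k} \<in> F 0" using n Suc.IH by blast
    then show ?case by (simp add: lessThan_Suc)
  qed
  have "strict_mono n"
    unfolding strict_mono_Suc_iff
  proof
    fix k
    obtain s where "s \<in> F (Suc (Suc k))" using barrier_nonempty_member[OF bar] by blast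
    then have "insert (n (Suc k)) s \<in> F (Suc k)" using n by blast
    then show "n k < n (Suc k)" using n by blast
  qed
  moreover have "\<exists>t. t \<noteq> {} \<and> (\<forall>y\<in>t. n k < y) \<and> t \<union> n ` {..<Suc k} \<in> F 0" for k
  proof -
    obtain t where "t \<in> F (Suc k)" "t \<noteq> {}" using barrier_nonempty_member[OF bar] .
    then show ?thesis using n lift[of t "Suc k"] by blast
  qed
  ultimately show False by (rule barrier_no_infinite_branch[OF bar])
qed

lemma wf_no_descending_subsequence:
  fixes g :: "nat \<Rightarrow> 'a"
  assumes wf: "wf R" and Y: "infinite Y"
    and desc: "\<And>i j. i \<in> Y \<Longrightarrow> j \<in> Y \<Longrightarrow> i < j \<Longrightarrow> (g j, g i) \<in> R"
  shows False
proof -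
  obtain i0 where "i0 \<in> Y" using Y by (metis ex_in_conv finite.emptyI)
  then obtain z where "z \<in> g ` Y" "\<forall>y. (y, z) \<in> R \<longrightarrow> y \<notin> g ` Y"
    using wf_eq_minimal[THEN iffD1, rule_format, of R "g i0" "g ` Y"] wf by blast
  then obtain i where "i \<in> Y" "\<forall>j\<in>Y. (g j, g i) \<notin> R" by blast
  moreover obtain j where "j \<in> Y" "i < j"
    using Y unfolding infinite_nat_iff_unbounded by blast
  ultimately show False using desc by blast
qed

lemma wqo_no_incomparable_subsequence:
  fixes g :: "nat \<Rightarrow> 'a"
  assumes wqo: "wqo_on A r" and g: "range g \<subseteq> A" and Y: "infinite Y"
    and incomparable: "\<And>i j. i \<in> Y \<Longrightarrow> j \<in> Y \<Longrightarrow> i < j \<Longrightarrow> (g i, g j) \<notin> r \<and> (g j, g i) \<notin> r"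
  shows False
proof -
  have incomp: "(g i, g j) \<notin> r" if "i \<in> Y" "j \<in> Y" "i \<noteq> j" for i j
    using that incomparable by (metis neq_iff)
  have "inj_on g Y"
  proof (rule inj_onI)
    fix i j assume "i \<in> Y" "j \<in> Y" "g i = g j"
    moreover have "(g i, g i) \<in> r"
      using wqo g unfolding wqo_on_def preorder_on_def refl_on_def by blast
    ultimately show "i = j" using incomp by metis
  qed
  then have "infinite (g ` Y)" using Y finite_imageD by blast
  moreover have "antichain_on A r (g ` Y)"
    unfolding antichain_on_def using g incomp by blast
  ultimately show False using wqo unfolding wqo_on_def by blast
qed

lemma wqo_on_imp_good_seq:
  fixes g :: "nat \<Rightarrow> 'a"
  assumes wqo: "wqo_on A r" and g: "range g \<subseteq> A"
  shows "\<exists>i j. i < j \<and> (g i, g j) \<in> r"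
proof (rule ccontr)
  assume bad: "\<not> ?thesis"
  define col where "col X = (if (g (Max X), g (Min X)) \<in> r then 0 else 1 :: nat)" for X
  obtain Y t where Y: "infinite Y" "\<forall>i\<in>Y. \<forall>j\<in>Y. i \<noteq> j \<longrightarrow> col {i, j} = t"
    using Ramsey2[of "UNIV :: nat set" col 2] unfolding col_def by fastforce
  have col_less: "col {i, j} = (if (g j, g i) \<in> r then 0 else 1)" if "i < j" for i j
    using that unfolding col_def by (simp add: max_def min_def)
  show False
  proof (cases "t = 0")
    case True
    have "(g j, g i) \<in> strict_part A r" if ij: "i \<in> Y" "j \<in> Y" "i < j" for i j
    proof -
      have "col {i, j} = 0" using Y(2) ij True by auto
      then have "(g j, g i) \<in> r" using col_less[OF ij(3)] by (simp split: if_splits)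
      moreover have "(g i, g j) \<notin> r" using bad ij(3) by blast
      ultimately show ?thesis using g unfolding strict_part_def by auto
    qed
    moreover have "wf (strict_part A r)" using wqo unfolding wqo_on_def by blast
    ultimately show False using wf_no_descending_subsequence Y(1) by blast
  next
    case False
    have "(g i, g j) \<notin> r \<and> (g j, g i) \<notin> r" if ij: "i \<in> Y" "j \<in> Y" "i < j" for i j
    proof -
      have "col {i, j} \<noteq> 0" using Y(2) ij False by auto
      then show ?thesis using col_less[OF ij(3)] bad ij(3) by (auto split: if_splits)
    qed
    then show False using wqo_no_incomparable_subsequence[OF wqo g Y(1)] by blast
  qed
qed

lemma good_seq_imp_wqo_on:
  assumes pre: "preorder_on A r"
    and good: "\<And>g :: nat \<Rightarrow> 'a. range g \<subseteq> A \<Longrightarrow> \<exists>i j. i < j \<and> (g i, g j) \<in> r"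
  shows "wqo_on A r"
proof -
  have trans: "trans r" using pre unfolding preorder_on_def by blast
  have "wf (strict_part A r)"
  proof (rule ccontr)
    assume "\<not> wf (strict_part A r)"
    then obtain g where g: "\<And>i. (g (Suc i), g i) \<in> strict_part A r"
      unfolding wf_iff_no_infinite_down_chain by blast
    have below: "(g j, g (Suc i)) \<in> r" if "i < j" for i j
      using that
    proof (induction j rule: less_induct)
      case (less j)
      show ?case
      proof (cases "j = Suc i")
        case False
        then obtain j' where "j = Suc j'" "i < j'" using less.prems by (metis lessE)
        then show ?thesis
          using less.IH[of j'] g[of j'] trans unfolding strict_part_def trans_def by blast
      qed (use pre g in \<open>auto simp: strict_part_def preorder_on_def refl_on_def\<close>)
    qed
    have "range g \<subseteq> A" using g unfolding strict_part_def by blast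
    then obtain i j where "i < j" "(g i, g j) \<in> r" using good[OF \<open>range g \<subseteq> A\<close>] by blast
    then have "(g i, g (Suc i)) \<in> r" using below trans unfolding trans_def by blast
    then show False using g[of i] unfolding strict_part_def by blast
  qed
  moreover have "finite S" if S: "antichain_on A r S" for S
  proof (rule ccontr)
    assume "infinite S"
    then obtain g :: "nat \<Rightarrow> 'a" where "inj g" "range g \<subseteq> S"
      using infinite_countable_subset by blast
    moreover from this S have "range g \<subseteq> A" unfolding antichain_on_def by blast
    then obtain i j where "i < j" "(g i, g j) \<in> r" using good[OF \<open>range g \<subseteq> A\<close>] by blast
    ultimately show False
      using S unfolding antichain_on_def by (metis injD less_irrefl range_subsetD)
  qed
  ultimately show ?thesis using pre unfolding wqo_on_def by blast
qed

lemma bqo_on_imp_good_seq: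
  fixes g :: "nat \<Rightarrow> 'a"
  assumes bqo: "bqo_on A r" and g: "range g \<subseteq> A"
  shows "\<exists>i j. i < j \<and> (g i, g j) \<in> r"
proof -
  have "alpha_bqo natLeq A r"
    using bqo natLeq_Well_order unfolding bqo_on_def by (simp add: Field_natLeq)
  moreover have "(g \<circ> the_elem) ` range (\<lambda>n. {n}) \<subseteq> A" using g by auto
  ultimately have "good r (range (\<lambda>n. {n})) (g \<circ> the_elem)"
    unfolding alpha_bqo_def using barrier_singletons lex_rel_singletons by blast
  then show ?thesis
    unfolding good_def using shift_rel_singleton by auto
qed

lemma bqo_on_imp_wqo_on: "bqo_on A r \<Longrightarrow> wqo_on A r"
  using good_seq_imp_wqo_on bqo_on_imp_good_seq unfolding bqo_on_def by blast

definition upper :: "'a set \<Rightarrow> 'a rel \<Rightarrow> 'a \<Rightarrow> 'a set" where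
  "upper A r x = {y\<in>A. (x, y) \<in> r \<and> x \<noteq> y}"

definition dominated :: "'a set \<Rightarrow> 'a rel \<Rightarrow> 'a \<Rightarrow> 'a set" where
  "dominated A r x = {y\<in>A. y \<notin> upper A r x \<and> upper A r y \<subseteq> upper A r x}"

lemma finite_dominated: "wqo_on A r \<Longrightarrow> finite (dominated A r x)"
proof -
  assume "wqo_on A r"
  moreover have "antichain_on A r (dominated A r x)"
    unfolding antichain_on_def dominated_def upper_def by blast
  ultimately show ?thesis unfolding wqo_on_def by blast
qed

lemma upper_closed:
  assumes "partial_order_on A r" "y \<in> upper A r x" "(y, z) \<in> r"
  shows "z \<in> upper A r x"
  using assms unfolding partial_order_on_def preorder_on_def upper_def trans_def antisym_def
  by blast

lemma wqo_upper_not_strictly_increasing: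
  assumes po: "partial_order_on A r" and wqo: "wqo_on A r"
    and incr: "\<And>i. upper A r (g i) \<subset> upper A r (g (Suc i))"
  shows False
proof -
  have "\<forall>i. \<exists>w. w \<in> upper A r (g (Suc i)) - upper A r (g i)"
    using incr by blast
  from choice[OF this] obtain z where z: "\<forall>i. z i \<in> upper A r (g (Suc i)) - upper A r (g i)" ..
  have mono: "upper A r (g i) \<subseteq> upper A r (g j)" if "i \<le> j" for i j
    using incr by (intro lift_Suc_mono_le[of "\<lambda>i. upper A r (g i)", OF _ that]) blast
  have "(z i, z j) \<notin> r" if "i < j" for i j
  proof
    assume "(z i, z j) \<in> r"
    have "z i \<in> upper A r (g j)" using z mono[of "Suc i" j] that by auto
    then have "z j \<in> upper A r (g j)" using upper_closed[OF po] \<open>(z i, z j) \<in> r\<close> by blast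
    then show False using z by blast
  qed
  moreover have "range z \<subseteq> A" using z unfolding upper_def by blast
  ultimately show False using wqo_on_imp_good_seq[OF wqo] by blast
qed

text \<open>The only use of the interval representation: interval orders are 2+2-free.\<close>

lemma interval_order_upper_linear:
  fixes C :: "'c::linorder set"
  assumes io: "interval_order_in A r C" and "x \<in> A" "y \<in> A"
  shows "upper A r x \<subseteq> upper A r y \<or> upper A r y \<subseteq> upper A r x"
proof -
  obtain I :: "'a \<Rightarrow> 'c set" where intervals: "\<forall>x\<in>A. interval_of C (I x)"
    and I: "\<forall>x\<in>A. \<forall>y\<in>A. (x, y) \<in> r \<longleftrightarrow> x = y \<or> (\<forall>u\<in>I x. \<forall>v\<in>I y. u < v)"
    using io unfolding interval_order_in_def by blast
  have ne: "\<forall>x\<in>A. I x \<noteq> {}" using intervals unfolding interval_of_def by blast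
  let ?below = "\<lambda>P Q. \<forall>u\<in>P. \<forall>v\<in>Q. u < v"
  have irrefl: "\<not> ?below (I x) (I x)" if x: "x \<in> A" for x
  proof -
    obtain u where "u \<in> I x" using ne x by blast
    then show ?thesis by blast
  qed
  have upper: "upper A r x = {z\<in>A. ?below (I x) (I z)}" if "x \<in> A" for x
    using I that irrefl unfolding upper_def by blast
  have "?below (I x) (I w)"
    if xz: "?below (I x) (I z)" and yz: "\<not> ?below (I y) (I z)" and yw: "?below (I y) (I w)" for z w
  proof -
    obtain q v where "q \<in> I y" "v \<in> I z" "v \<le> q" using yz by (auto simp: not_less)
    show ?thesis
    proof (intro ballI)
      fix u u' assume "u \<in> I x" "u' \<in> I w"
      then have "u < v" "q < u'" using xz yw \<open>v \<in> I z\<close> \<open>q \<in> I y\<close> by blast+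
      then show "u < u'" using \<open>v \<le> q\<close> by order
    qed
  qed
  then show ?thesis unfolding upper[OF \<open>x \<in> A\<close>] upper[OF \<open>y \<in> A\<close>] by blast
qed

section \<open>Bad maps on barriers\<close>

locale bad_barrier_map =
  fixes A :: "'a set" and r :: "'a rel" and B :: "nat set set" and f :: "nat set \<Rightarrow> 'a"
  assumes partial_order: "partial_order_on A r"
    and wqo: "wqo_on A r"
    and upper_linear: "\<And>x y. x \<in> A \<Longrightarrow> y \<in> A \<Longrightarrow> upper A r x \<subseteq> upper A r y \<or> upper A r y \<subseteq> upper A r x"
    and barrier_B: "barrier B"
    and maps_into: "f ` B \<subseteq> A"
    and bad: "\<And>s t. s \<in> B \<Longrightarrow> t \<in> B \<Longrightarrow> s \<lhd> t \<Longrightarrow> (f s, f t) \<notin> r"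
begin

lemma not_constant:
  assumes N: "N \<subseteq> \<Union>B" "infinite N"
  shows "\<not> (\<forall>t\<in>B. t \<subseteq> N \<longrightarrow> f t = a)"
proof
  assume const: "\<forall>t\<in>B. t \<subseteq> N \<longrightarrow> f t = a"
  define x where "x = Inf N"
  have x: "x \<in> N" "\<forall>y\<in>N - {x}. x < y"
    using Inf_nat_def1[of N] Inf_nat_less[of _ N] N(2) unfolding x_def by auto
  have L: "N - {x} \<subseteq> \<Union>B" "infinite (N - {x})" using N by auto
  have N_eq: "insert x (N - {x}) = N" using x(1) by blast
  let ?s = "barrier_prefix B N" and ?t = "barrier_prefix B (N - {x})"
  have "x \<in> \<Union>B" using x(1) N(1) by blast
  from barrier_prefix_insert(2)[OF barrier_B L this x(2)] have "?s \<lhd> ?t"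
    by (simp only: N_eq)
  moreover have s: "?s \<in> B" "init_seg ?s N" using barrier_prefix[OF barrier_B N] .
  moreover have t: "?t \<in> B" "init_seg ?t (N - {x})" using barrier_prefix[OF barrier_B L] .
  moreover have "?s \<subseteq> N" "?t \<subseteq> N" using s(2) t(2) init_seg_subset by blast+
  moreover have "(f ?s, f ?s) \<in> r"
    using partial_order maps_into \<open>?s \<in> B\<close>
    unfolding partial_order_on_def preorder_on_def refl_on_def by blast
  ultimately show False using const bad[of ?s ?t] by auto
qed

definition stable :: "nat \<Rightarrow> nat set \<Rightarrow> bool" where
  "stable x t \<longleftrightarrow> upper A r (f t) \<subseteq> upper A r (f (barrier_prefix B (insert x t)))"

definition homogeneous_on :: "nat set \<Rightarrow> nat set \<Rightarrow> bool" where
  "homogeneous_on u X \<longleftrightarrow> (\<exists>c. \<forall>t\<in>extensions B u. t \<subseteq> X \<longrightarrow> f t = c)"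

lemma homogeneous_on_subset: "homogeneous_on u X \<Longrightarrow> Y \<subseteq> X \<Longrightarrow> homogeneous_on u Y"
  unfolding homogeneous_on_def by (meson subset_trans)

lemma stable_homogeneous:
  assumes "infinite M"
  shows "\<exists>N\<subseteq>M. infinite N \<and>
    ((\<forall>t\<in>B. t \<subseteq> N \<longrightarrow> stable x t) \<or> (\<forall>t\<in>B. t \<subseteq> N \<longrightarrow> \<not> stable x t))"
proof -
  obtain N where "N \<subseteq> M" "infinite N" "\<exists>a. \<forall>t\<in>B. t \<subseteq> N \<longrightarrow> stable x t = a"
    using thin_colouring_homogeneous[OF barrier_thin[OF barrier_B], of "{True, False}" M "stable x"]
      assms by auto
  then show ?thesis by metis
qed

lemma no_unstable_sequence:
  assumes mono: "strict_mono xs" and range: "range xs \<subseteq> \<Union>B"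
    and unstable: "\<And>k. \<not> stable (xs k) (barrier_prefix B (xs ` {Suc k..}))"
  shows False
proof -
  define t where "t k = barrier_prefix B (xs ` {k..})" for k
  have L: "xs ` {k..} \<subseteq> \<Union>B" "infinite (xs ` {k..})" for k
    using range strict_mono_infinite_image[OF mono infinite_Ici] by auto
  have t: "t k \<in> B" for k
    using barrier_prefix(1)[OF barrier_B L] unfolding t_def .
  have "upper A r (f (t k)) \<subset> upper A r (f (t (Suc k)))" for k
  proof -
    have "{k..} = insert k {Suc k..}" by auto
    then have split: "xs ` {k..} = insert (xs k) (xs ` {Suc k..})" by simp
    have less: "\<forall>y\<in>xs ` {Suc k..}. xs k < y"
      using strict_mono_less[OF mono] by auto
    have "xs k \<in> \<Union>B" using range by blast
    from barrier_prefix_insert(1)[OF barrier_B L[of "Suc k"] this less]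
    have "init_seg (t k) (insert (xs k) (t (Suc k)))"
      unfolding t_def split by simp
    then have "barrier_prefix B (insert (xs k) (t (Suc k))) = t k"
      using barrier_prefix_eq[OF barrier_B t] by blast
    then have "\<not> upper A r (f (t (Suc k))) \<subseteq> upper A r (f (t k))"
      using unstable[of k] unfolding stable_def t_def by simp
    then show ?thesis
      using upper_linear[of "f (t k)" "f (t (Suc k))"] maps_into t by blast
  qed
  from wqo_upper_not_strictly_increasing[OF partial_order wqo, of "\<lambda>k. f (t k)", OF this]
  show False .
qed

lemma unstable_sequence:
  assumes unstable: "\<And>x M. x \<in> \<Union>B \<Longrightarrow> M \<subseteq> \<Union>B \<Longrightarrow> infinite M \<Longrightarrow> \<forall>y\<in>M. x < y \<Longrightarrow>
    \<exists>N\<subseteq>M. infinite N \<and> (\<forall>t\<in>B. t \<subseteq> N \<longrightarrow> \<not> stable x t)"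
  shows "\<exists>xs :: nat \<Rightarrow> nat. strict_mono xs \<and> range xs \<subseteq> \<Union>B \<and>
    (\<forall>k. \<not> stable (xs k) (barrier_prefix B (xs ` {Suc k..})))"
proof -
  define I where "I p M \<longleftrightarrow> M \<subseteq> \<Union>B \<and> (\<forall>x\<in>p. \<forall>t\<in>B. t \<subseteq> M \<longrightarrow> \<not> stable x t)" for p M
  have start: "I {} (\<Union>B)" unfolding I_def by simp
  have step: "\<exists>x\<in>M. \<exists>N\<subseteq>{y\<in>M. x < y}. infinite N \<and> I (insert x p) N"
    if I: "I p M" and M: "infinite M" for p M
  proof -
    obtain x where "x \<in> M" using M by (metis ex_in_conv finite.emptyI)
    have "x \<in> \<Union>B" "{y\<in>M. x < y} \<subseteq> \<Union>B" using I \<open>x \<in> M\<close> unfolding I_def by auto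
    from unstable[OF this infinite_tail[OF M]] obtain N where N: "N \<subseteq> {y\<in>M. x < y}" "infinite N"
      "\<forall>t\<in>B. t \<subseteq> N \<longrightarrow> \<not> stable x t"
      by blast
    then have "I (insert x p) N" using I unfolding I_def by blast
    then show ?thesis using \<open>x \<in> M\<close> N by blast
  qed
  have "\<exists>xs :: nat \<Rightarrow> nat. strict_mono xs \<and> range xs \<subseteq> \<Union>B \<and>
      (\<forall>k. \<exists>N. I (xs ` {..<k}) N \<and> infinite N \<and> xs ` {k..} \<subseteq> N)"
    using start barrier_Union_infinite[OF barrier_B] step by (rule fusion)
  then obtain xs :: "nat \<Rightarrow> nat" where mono: "strict_mono xs" and range: "range xs \<subseteq> \<Union>B"
    and stage: "\<forall>k. \<exists>N. I (xs ` {..<k}) N \<and> infinite N \<and> xs ` {k..} \<subseteq> N"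
    by blast
  have "\<not> stable (xs k) (barrier_prefix B (xs ` {Suc k..}))" for k
  proof -
    obtain N where N: "I (xs ` {..<Suc k}) N" "xs ` {Suc k..} \<subseteq> N"
      using spec[OF stage, of "Suc k"] by blast
    let ?L = "xs ` {Suc k..}"
    have "?L \<subseteq> \<Union>B" "infinite ?L"
      using range strict_mono_infinite_image[OF mono infinite_Ici] by auto
    from barrier_prefix[OF barrier_B this]
    have "barrier_prefix B ?L \<in> B" "barrier_prefix B ?L \<subseteq> N"
      using N(2) init_seg_subset by blast+
    then show ?thesis using N(1) unfolding I_def by blast
  qed
  then show ?thesis using mono range by blast
qed

lemma exists_stable_point:
  obtains x0 N where "x0 \<in> \<Union>B" "N \<subseteq> \<Union>B" "infinite N" "\<forall>y\<in>N. x0 < y"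
    "\<forall>t\<in>B. t \<subseteq> N \<longrightarrow> stable x0 t"
proof (rule ccontr)
  assume no_point: "\<not> thesis"
  note point = that
  have "\<exists>N\<subseteq>M. infinite N \<and> (\<forall>t\<in>B. t \<subseteq> N \<longrightarrow> \<not> stable x t)"
    if x: "x \<in> \<Union>B" and M: "M \<subseteq> \<Union>B" "infinite M" "\<forall>y\<in>M. x < y" for x M
  proof -
    from stable_homogeneous[OF M(2), where x = x] obtain N where N: "N \<subseteq> M" "infinite N"
      and alt: "(\<forall>t\<in>B. t \<subseteq> N \<longrightarrow> stable x t) \<or> (\<forall>t\<in>B. t \<subseteq> N \<longrightarrow> \<not> stable x t)"
      by blast
    have "N \<subseteq> \<Union>B" "\<forall>y\<in>N. x < y" using N(1) M by auto
    then have "\<not> (\<forall>t\<in>B. t \<subseteq> N \<longrightarrow> stable x t)"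
      using point[OF x _ N(2)] no_point by blast
    then show ?thesis using alt N by blast
  qed
  then have "\<exists>xs :: nat \<Rightarrow> nat. strict_mono xs \<and> range xs \<subseteq> \<Union>B \<and>
      (\<forall>k. \<not> stable (xs k) (barrier_prefix B (xs ` {Suc k..})))"
    by (rule unstable_sequence)
  then show False using no_unstable_sequence by blast
qed

end

locale stable_point = bad_barrier_map +
  fixes x0 :: nat and N :: "nat set"
  assumes x0_mem: "x0 \<in> \<Union>B"
    and N_sub: "N \<subseteq> \<Union>B" and N_inf: "infinite N" and x0_less: "\<forall>y\<in>N. x0 < y"
    and stable_on_N: "\<And>t. t \<in> B \<Longrightarrow> t \<subseteq> N \<Longrightarrow> stable x0 t"
begin

lemma extension_dominated:
  assumes u: "insert x0 u \<in> B" and t: "t \<in> extensions B u" "t \<subseteq> N"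
  shows "f t \<in> dominated A r (f (insert x0 u))"
proof -
  have tB: "t \<in> B" "init_seg u t" "u \<noteq> t" using t(1) unfolding extensions_def by auto
  have x0_t: "\<forall>y\<in>t. x0 < y" using t(2) x0_less by blast
  have seg: "init_seg (insert x0 u) (insert x0 t)" using init_seg_insert[OF tB(2) x0_t] .
  have "barrier_prefix B (insert x0 t) = insert x0 u"
    using barrier_prefix_eq[OF barrier_B u seg] .
  then have "upper A r (f t) \<subseteq> upper A r (f (insert x0 u))"
    using stable_on_N[OF tB(1) t(2)] unfolding stable_def by simp
  moreover have "insert x0 u \<lhd> t"
  proof (rule shift_relI[OF barrier_finite[OF barrier_B tB(1)] x0_t seg])
    have "x0 \<notin> t" "u \<subseteq> t" using x0_t init_seg_subset[OF tB(2)] by auto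
    then show "insert x0 u \<noteq> insert x0 t"
      using tB(3) insert_ident[of x0 u t] by blast
  qed
  then have "f t \<notin> upper A r (f (insert x0 u))"
    using bad[OF u tB(1)] unfolding upper_def by blast
  ultimately show ?thesis using maps_into tB(1) unfolding dominated_def by blast
qed

lemma singleton_not_mem: "{x0} \<notin> B"
proof
  assume "{x0} \<in> B"
  have "\<forall>t\<in>B. t \<subseteq> N \<longrightarrow> f t \<in> dominated A r (f {x0})"
  proof (intro ballI impI)
    fix t assume "t \<in> B" "t \<subseteq> N"
    then have "t \<in> extensions B {}"
      using barrier_nonempty[OF barrier_B] unfolding extensions_def init_seg_def by auto
    then show "f t \<in> dominated A r (f {x0})"
      using extension_dominated[of "{}"] \<open>{x0} \<in> B\<close> \<open>t \<subseteq> N\<close> by simp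
  qed
  from thin_colouring_homogeneous[OF barrier_thin[OF barrier_B] finite_dominated[OF wqo] N_inf this]
  obtain N' a where N': "N' \<subseteq> N" "infinite N'" "\<forall>t\<in>B. t \<subseteq> N' \<longrightarrow> f t = a"
    by blast
  have "N' \<subseteq> \<Union>B" using N'(1) N_sub by blast
  from not_constant[OF this N'(2)] N'(3) show False by blast
qed

lemma extensions_homogeneous_step:
  assumes p: "finite p" "p \<subseteq> N" and x: "x \<in> N" and M: "M \<subseteq> N" "infinite M"
  shows "\<exists>M'\<subseteq>M. infinite M' \<and> (\<forall>u\<subseteq>p. insert x0 (insert x u) \<in> B \<longrightarrow>
    (\<exists>c. \<forall>t\<in>extensions B (insert x u). t - insert x u \<subseteq> M' \<longrightarrow> f t = c))"
proof -
  define U where "U = {u. u \<subseteq> p \<and> insert x0 (insert x u) \<in> B}"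
  define T where "T u = (\<lambda>t. t - insert x u) ` extensions B (insert x u)" for u
  have finU: "finite U" using p(1) unfolding U_def by simp
  have hyp: "thin (T u) \<and> finite (dominated A r (f (insert x0 (insert x u)))) \<and>
      (\<forall>s\<in>T u. s \<subseteq> M \<longrightarrow> f (insert x u \<union> s) \<in> dominated A r (f (insert x0 (insert x u))))"
    if "u \<in> U" for u
  proof (intro conjI ballI impI)
    show "thin (T u)" unfolding T_def by (rule thin_extensions_diff[OF barrier_B])
    show "finite (dominated A r (f (insert x0 (insert x u))))" by (rule finite_dominated[OF wqo])
    fix s assume "s \<in> T u" "s \<subseteq> M"
    then obtain t where t: "t \<in> extensions B (insert x u)" "s = t - insert x u"
      unfolding T_def by blast
    then have "insert x u \<union> s = t"
      unfolding extensions_def using init_seg_subset by blast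
    moreover have "t \<subseteq> N" using t(2) \<open>s \<subseteq> M\<close> M(1) x p(2) \<open>u \<in> U\<close> unfolding U_def by blast
    ultimately show "f (insert x u \<union> s) \<in> dominated A r (f (insert x0 (insert x u)))"
      using extension_dominated \<open>u \<in> U\<close> t(1) unfolding U_def by blast
  qed
  from thin_colourings_homogeneous[where c = "\<lambda>u s. f (insert x u \<union> s)", OF finU M(2) hyp]
  obtain M' where M': "M' \<subseteq> M" "infinite M'"
    and const: "\<forall>u\<in>U. \<exists>c. \<forall>s\<in>T u. s \<subseteq> M' \<longrightarrow> f (insert x u \<union> s) = c"
    by blast
  have "\<exists>c. \<forall>t\<in>extensions B (insert x u). t - insert x u \<subseteq> M' \<longrightarrow> f t = c"
    if u: "u \<subseteq> p" "insert x0 (insert x u) \<in> B" for u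
  proof -
    obtain c where c: "\<forall>s\<in>T u. s \<subseteq> M' \<longrightarrow> f (insert x u \<union> s) = c"
      using const u unfolding U_def by blast
    have "f t = c" if "t \<in> extensions B (insert x u)" "t - insert x u \<subseteq> M'" for t
    proof -
      have "insert x u \<union> (t - insert x u) = t"
        using that(1) unfolding extensions_def using init_seg_subset by blast
      moreover have "t - insert x u \<in> T u" using that(1) unfolding T_def by blast
      ultimately show ?thesis using c that(2) by metis
    qed
    then show ?thesis by blast
  qed
  then show ?thesis using M' by blast
qed

lemma homogeneous_on_insert:
  assumes p: "finite p" "p \<subseteq> N" and M: "M \<subseteq> N" "infinite M" and x: "x \<in> M"
    and below: "\<forall>z\<in>p. \<forall>y\<in>M. z < y"
    and old: "\<forall>u\<subseteq>p. insert x0 u \<in> B \<longrightarrow> homogeneous_on u (p \<union> M)"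
  shows "\<exists>M'\<subseteq>{y\<in>M. x < y}. infinite M' \<and>
    (\<forall>u\<subseteq>insert x p. insert x0 u \<in> B \<longrightarrow> homogeneous_on u (insert x p \<union> M'))"
proof -
  have "x \<in> N" "{y\<in>M. x < y} \<subseteq> N" "infinite {y\<in>M. x < y}"
    using M x infinite_tail[OF M(2)] by auto
  from extensions_homogeneous_step[OF p this] obtain M' where M': "M' \<subseteq> {y\<in>M. x < y}" "infinite M'"
    and new: "\<forall>u\<subseteq>p. insert x0 (insert x u) \<in> B \<longrightarrow>
      (\<exists>c. \<forall>t\<in>extensions B (insert x u). t - insert x u \<subseteq> M' \<longrightarrow> f t = c)"
    by blast
  have "homogeneous_on u (insert x p \<union> M')" if u: "u \<subseteq> insert x p" "insert x0 u \<in> B" for u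
  proof (cases "x \<in> u")
    case False
    then have "homogeneous_on u (p \<union> M)" using old u by blast
    moreover have "insert x p \<union> M' \<subseteq> p \<union> M" using x M'(1) by blast
    ultimately show ?thesis by (rule homogeneous_on_subset)
  next
    case True
    then have "insert x (u - {x}) = u" "u - {x} \<subseteq> p" using u(1) by auto
    then obtain c where c: "\<forall>t\<in>extensions B u. t - u \<subseteq> M' \<longrightarrow> f t = c"
      using new u(2) by metis
    have "\<forall>z\<in>p. z < x" using below x by blast
    have sub: "t - u \<subseteq> M'" if t: "t \<in> extensions B u" "t \<subseteq> insert x p \<union> M'" for t
    proof -
      have "init_seg u t" using t(1) unfolding extensions_def by blast
      from init_seg_diff_subset[OF this True \<open>\<forall>z\<in>p. z < x\<close> t(2)] show ?thesis .
    qed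
    show ?thesis
      unfolding homogeneous_on_def
    proof (intro exI[of _ c] ballI impI)
      fix t assume "t \<in> extensions B u" "t \<subseteq> insert x p \<union> M'"
      then show "f t = c" using c sub by blast
    qed
  qed
  then show ?thesis using M' by blast
qed

lemma extensions_homogeneous:
  "\<exists>N'\<subseteq>N. infinite N' \<and> (\<forall>u\<subseteq>N'. insert x0 u \<in> B \<longrightarrow> homogeneous_on u N')"
proof -
  define I where "I p M \<longleftrightarrow> finite p \<and> p \<subseteq> N \<and> M \<subseteq> N \<and> (\<forall>z\<in>p. \<forall>y\<in>M. z < y) \<and>
    (\<forall>u\<subseteq>p. insert x0 u \<in> B \<longrightarrow> homogeneous_on u (p \<union> M))" for p M
  have start: "I {} N" unfolding I_def using singleton_not_mem by auto
  have step: "\<exists>x\<in>M. \<exists>M'\<subseteq>{y\<in>M. x < y}. infinite M' \<and> I (insert x p) M'"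
    if I: "I p M" and M: "infinite M" for p M
  proof -
    have p: "finite p" "p \<subseteq> N" and MN: "M \<subseteq> N" and below: "\<forall>z\<in>p. \<forall>y\<in>M. z < y"
      and old: "\<forall>u\<subseteq>p. insert x0 u \<in> B \<longrightarrow> homogeneous_on u (p \<union> M)"
      using I unfolding I_def by auto
    obtain x where "x \<in> M" using M by (metis ex_in_conv finite.emptyI)
    from homogeneous_on_insert[OF p MN M this below old] obtain M'
      where M': "M' \<subseteq> {y\<in>M. x < y}" "infinite M'"
      and hom: "\<forall>u\<subseteq>insert x p. insert x0 u \<in> B \<longrightarrow> homogeneous_on u (insert x p \<union> M')"
      by blast
    have "\<forall>z\<in>insert x p. \<forall>y\<in>M'. z < y" using below M'(1) \<open>x \<in> M\<close> by fastforce
    then have "I (insert x p) M'"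
      using p \<open>x \<in> M\<close> MN M'(1) hom unfolding I_def by auto
    then show ?thesis using \<open>x \<in> M\<close> M' by blast
  qed
  have "\<exists>xs :: nat \<Rightarrow> nat. strict_mono xs \<and> range xs \<subseteq> N \<and>
      (\<forall>k. \<exists>M. I (xs ` {..<k}) M \<and> infinite M \<and> xs ` {k..} \<subseteq> M)"
    using start N_inf step by (rule fusion)
  then obtain xs :: "nat \<Rightarrow> nat" where mono: "strict_mono xs" and range: "range xs \<subseteq> N"
    and stage: "\<forall>k. \<exists>M. I (xs ` {..<k}) M \<and> infinite M \<and> xs ` {k..} \<subseteq> M"
    by blast
  have "homogeneous_on u (range xs)" if u: "u \<subseteq> range xs" "insert x0 u \<in> B" for u
  proof -
    have "finite u" using barrier_finite[OF barrier_B u(2)] by simp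
    then obtain k where k: "u \<subseteq> xs ` {..<k}" using finite_subset_range_lessThan u(1) by blast
    obtain M where M: "I (xs ` {..<k}) M" "xs ` {k..} \<subseteq> M" using spec[OF stage, of k] by blast
    have hom: "homogeneous_on u (xs ` {..<k} \<union> M)" using M(1) k u(2) unfolding I_def by blast
    have "xs j \<in> xs ` {..<k} \<union> M" for j
      using M(2) by (cases "j < k") (auto simp: not_less image_subset_iff)
    then have "range xs \<subseteq> xs ` {..<k} \<union> M" by blast
    with hom show ?thesis by (rule homogeneous_on_subset)
  qed
  then show ?thesis
    using range strict_mono_infinite_image[OF mono, of UNIV] by auto
qed

end

locale homogeneous_section = stable_point +
  fixes N' :: "nat set"
  assumes N'_sub: "N' \<subseteq> N" and N'_inf: "infinite N'"
    and homogeneous: "\<And>u. u \<subseteq> N' \<Longrightarrow> insert x0 u \<in> B \<Longrightarrow> homogeneous_on u N'"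
begin

definition sub_barrier :: "nat set set" where
  "sub_barrier = {u. u \<subseteq> N' \<and> insert x0 u \<in> B}"

text \<open>By \<open>homogeneous\<close>, any extension of \<open>u\<close> inside \<open>N'\<close> gives the same value (\<open>sub_map_eq\<close>).\<close>

definition sub_map :: "nat set \<Rightarrow> 'a" where
  "sub_map u = f (barrier_prefix B (u \<union> {y\<in>N'. Max u < y}))"

lemma N'_Union: "N' \<subseteq> \<Union>B" and x0_less_N': "\<forall>y\<in>N'. x0 < y"
  using N'_sub N_sub x0_less by blast+

lemma barrier_sub_barrier: "barrier sub_barrier"
  unfolding sub_barrier_def
  by (rule barrier_section[OF barrier_B x0_mem singleton_not_mem N'_Union N'_inf x0_less_N'])

lemma sub_barrier_descent: "(sub_barrier, B) \<in> barrier_descent"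
  unfolding barrier_descent_def using barrier_sub_barrier barrier_B x0_less_N'
  by (auto simp: sub_barrier_def)

lemma prefix_extension:
  assumes u: "u \<in> sub_barrier" and L: "init_seg u L" "L \<subseteq> N'" "infinite L"
  shows "barrier_prefix B L \<in> extensions B u" "barrier_prefix B L \<subseteq> N'"
proof -
  have "insert x0 u \<in> B" "x0 \<notin> L" "L \<subseteq> \<Union>B"
    using u L(2) x0_less_N' N'_Union unfolding sub_barrier_def by auto
  then show "barrier_prefix B L \<in> extensions B u"
    using barrier_prefix_extension[OF barrier_B _ L(1) _ _ L(3)] by blast
  show "barrier_prefix B L \<subseteq> N'"
    using barrier_prefix(2)[OF barrier_B \<open>L \<subseteq> \<Union>B\<close> L(3)] L(2) init_seg_subset by blast
qed

lemma sub_map_eq: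
  assumes u: "u \<in> sub_barrier" and t: "t \<in> extensions B u" "t \<subseteq> N'"
  shows "sub_map u = f t"
proof -
  obtain c where c: "\<forall>t\<in>extensions B u. t \<subseteq> N' \<longrightarrow> f t = c"
    using homogeneous u unfolding sub_barrier_def homogeneous_on_def by blast
  let ?L = "u \<union> {y\<in>N'. Max u < y}"
  have "finite u" using u barrier_sub_barrier barrier_finite by blast
  then have "init_seg u ?L" "?L \<subseteq> N'" "infinite ?L"
    using init_seg_Un_tail u infinite_tail[OF N'_inf] unfolding sub_barrier_def by auto
  from prefix_extension[OF u this] have "sub_map u = c"
    using c unfolding sub_map_def by blast
  then show ?thesis using c t by simp
qed

lemma sub_map_into: "sub_map ` sub_barrier \<subseteq> A"
proof
  fix a assume "a \<in> sub_map ` sub_barrier"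
  then obtain u where u: "u \<in> sub_barrier" "a = sub_map u" by blast
  let ?L = "u \<union> {y\<in>N'. Max u < y}"
  have "finite u" using u barrier_sub_barrier barrier_finite by blast
  then have "barrier_prefix B ?L \<in> extensions B u"
    using prefix_extension(1)[OF u(1)] init_seg_Un_tail u infinite_tail[OF N'_inf]
    unfolding sub_barrier_def by auto
  then show "a \<in> A"
    using u maps_into unfolding sub_map_def extensions_def by auto
qed

lemma sub_map_bad: "\<not> good r sub_barrier sub_map"
  unfolding good_def
proof (intro notI, elim bexE conjE)
  fix s t assume s: "s \<in> sub_barrier" and t: "t \<in> sub_barrier" and st: "s \<lhd> t"
    and r: "(sub_map s, sub_map t) \<in> r"
  have "s \<noteq> {}" using barrier_nonempty[OF barrier_sub_barrier s] .
  then obtain x where x: "x \<in> s" "\<forall>y\<in>t. x < y" "init_seg s (insert x t)"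
    using shift_relE[OF st] by blast
  have t_fin: "finite t" "t \<noteq> {}"
    using barrier_finite barrier_nonempty barrier_sub_barrier t by blast+
  define L where "L = t \<union> {y\<in>N'. Max t < y}"
  have L: "init_seg t L" "L \<subseteq> N'" "infinite L"
    using init_seg_Un_tail[OF t_fin(1)] t infinite_tail[OF N'_inf]
    unfolding L_def sub_barrier_def by auto
  have "x < Max t" using x(2) t_fin by simp
  then have xL: "\<forall>y\<in>L. x < y" using x(2) unfolding L_def by auto
  have "x \<in> N'" using x(1) s unfolding sub_barrier_def by blast
  have s_seg: "init_seg s (insert x L)"
    using init_seg_trans[OF x(3) init_seg_insert[OF L(1) xL]] .
  have "barrier_prefix B (insert x L) \<lhd> barrier_prefix B L"
    using barrier_prefix_insert(2)[OF barrier_B _ L(3) _ xL] L(2) \<open>x \<in> N'\<close> N'_Union by blast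
  moreover have "sub_map s = f (barrier_prefix B (insert x L))"
    using prefix_extension[OF s s_seg] L(2,3) \<open>x \<in> N'\<close> sub_map_eq[OF s] by simp
  moreover have "sub_map t = f (barrier_prefix B L)"
    using prefix_extension[OF t L] sub_map_eq[OF t] by simp
  moreover have "barrier_prefix B (insert x L) \<in> B" "barrier_prefix B L \<in> B"
    using prefix_extension[OF s s_seg] prefix_extension[OF t L] L(2,3) \<open>x \<in> N'\<close>
    unfolding extensions_def by auto
  ultimately show False using bad r by metis
qed

end

lemma (in bad_barrier_map) bad_descent:
  "\<exists>B' d. (B', B) \<in> barrier_descent \<and> d ` B' \<subseteq> A \<and> \<not> good r B' d"
proof -
  obtain x0 N where "x0 \<in> \<Union>B" "N \<subseteq> \<Union>B" "infinite N" "\<forall>y\<in>N. x0 < y"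
    "\<forall>t\<in>B. t \<subseteq> N \<longrightarrow> stable x0 t"
    by (rule exists_stable_point)
  then interpret stable_point A r B f x0 N
    by unfold_locales blast+
  obtain N' where "N' \<subseteq> N" "infinite N'" "\<forall>u\<subseteq>N'. insert x0 u \<in> B \<longrightarrow> homogeneous_on u N'"
    using extensions_homogeneous by blast
  then interpret homogeneous_section A r B f x0 N N'
    by unfold_locales blast+
  show ?thesis using sub_barrier_descent sub_map_into sub_map_bad by blast
qed

lemma wqo_upper_linear_imp_good:
  assumes po: "partial_order_on A r" and wqo: "wqo_on A r"
    and linear: "\<And>x y. x \<in> A \<Longrightarrow> y \<in> A \<Longrightarrow> upper A r x \<subseteq> upper A r y \<or> upper A r y \<subseteq> upper A r x"
    and "barrier B" "f ` B \<subseteq> A"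
  shows "good r B f"
  using assms(4,5)
proof (induction B arbitrary: f rule: wf_induct_rule[OF wf_barrier_descent])
  case (1 B f)
  show ?case
  proof (rule ccontr)
    assume "\<not> good r B f"
    then interpret bad_barrier_map A r B f
      using po wqo linear 1(2,3) by unfold_locales (auto simp: good_def)
    obtain B' d where "(B', B) \<in> barrier_descent" "d ` B' \<subseteq> A" "\<not> good r B' d"
      using bad_descent by blast
    then show False using 1(1) unfolding barrier_descent_def by blast
  qed
qed

theorem theorem1p6:
  fixes A :: "'a set" and r :: "'a rel" and C :: "'c::linorder set"
  assumes "interval_order_in A r C"
  shows "bqo_on A r \<longleftrightarrow> wqo_on A r"
proof
  assume "bqo_on A r"
  then show "wqo_on A r" by (rule bqo_on_imp_wqo_on)
next
  assume wqo: "wqo_on A r"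
  have po: "partial_order_on A r"
    using assms unfolding interval_order_in_def by blast
  have "good r B f" if "barrier B" "f ` B \<subseteq> A" for B and f :: "nat set \<Rightarrow> 'a"
    using wqo_upper_linear_imp_good[OF po wqo interval_order_upper_linear[OF assms] that] .
  then show "bqo_on A r"
    using wqo unfolding bqo_on_def alpha_bqo_def wqo_on_def by blast
qed

end
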